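(* Let $k\ge1$ and let $\bar\lambda_1,\dots,\bar\lambda_k$ be nonzero. For generic $(\bar m_1,\dots,\bar m_{k+1})\in\mathbb{C}^{k+1}$, the polynomial system \[ g_i(\mu,s):=\sum_{\ell=1}^k \bar\lambda_\ell\, M_i(\mu_\ell,s)-\bar m_i=0,\qquad i=1,\dots,k+1, \] in the $k+1$ unknowns $\mu_1,\dots,\mu_k,s$ has only finitely many complex solutions.
   Context: Define polynomials $M_i(\mu,s)$ for $i\ge 0$ by $M_0=1$, $M_1=\mu$, $M_i=\mu M_{i-1}+(i-1)\,s\,M_{i-2}$ for $i\ge2$ ($M_i(\mu,\sigma^2)$ is the $i$-th moment of $\mathcal N(\mu,\sigma^2)$). Here all components share a common unknown variance $s=\sigma^2$. "Generic" means outside a proper Zariski-closed subset of parameter space. *)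

theory Defs
  imports Complex_Main
begin

text \<open>Gaussian moment polynomials: M 0 = 1, M 1 = mu, M i = mu M (i-1) + (i-1) s M (i-2).\<close>
fun gmom :: "nat \<Rightarrow> complex \<Rightarrow> complex \<Rightarrow> complex" where
  "gmom 0 mu s = 1"
| "gmom (Suc 0) mu s = mu"
| "gmom (Suc (Suc i)) mu s = mu * gmom (Suc i) mu s + of_nat (Suc i) * s * gmom i mu s"

text \<open>Multivariate complex polynomials in the variables indexed by a finite set V,
  given by a coefficient function on exponent vectors with finite support.\<close>
definition is_mpoly :: "nat set \<Rightarrow> ((nat \<Rightarrow> nat) \<Rightarrow> complex) \<Rightarrow> bool" where
  "is_mpoly V c \<longleftrightarrow> finite {\<alpha>. c \<alpha> \<noteq> 0} \<and>
     (\<forall>\<alpha>. c \<alpha> \<noteq> 0 \<longrightarrow> (\<forall>i. i \<notin> V \<longrightarrow> \<alpha> i = 0))"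

definition mpoly_eval :: "nat set \<Rightarrow> ((nat \<Rightarrow> nat) \<Rightarrow> complex) \<Rightarrow> (nat \<Rightarrow> complex) \<Rightarrow> complex" where
  "mpoly_eval V c x = (\<Sum>\<alpha>\<in>{\<alpha>. c \<alpha> \<noteq> 0}. c \<alpha> * (\<Prod>i\<in>V. x i ^ \<alpha> i))"

text \<open>A property holds generically on C^V (V finite) if it holds outside the zero set of a
  nonzero polynomial, i.e. outside a proper Zariski-closed subset.\<close>
definition generic_on :: "nat set \<Rightarrow> ((nat \<Rightarrow> complex) \<Rightarrow> bool) \<Rightarrow> bool" where
  "generic_on V P \<longleftrightarrow> (\<exists>c. is_mpoly V c \<and> c \<noteq> (\<lambda>_. 0) \<and>
      (\<forall>x. mpoly_eval V c x \<noteq> 0 \<longrightarrow> P x))"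

definition moment_solutions ::
  "nat \<Rightarrow> (nat \<Rightarrow> complex) \<Rightarrow> (nat \<Rightarrow> complex) \<Rightarrow> ((nat \<Rightarrow> complex) \<times> complex) set" where
  "moment_solutions k lam m = {(mu, s). (\<forall>l. l \<notin> {1..k} \<longrightarrow> mu l = 0) \<and>
      (\<forall>i\<in>{1..k+1}. (\<Sum>l=1..k. lam l * gmom i (mu l) s) - m i = 0)}"

end

theory Submission
  imports Defs "HOL-Computational_Algebra.Polynomial" "HOL-Library.Function_Algebras" "HOL-Library.FuncSet"
begin

text \<open>
  The generic fibre of every polynomial map from n-space to n-space is finite, and the moment
  system is such a map in the variables (s, mu_1, ..., mu_k). Given polynomials F_1, ..., F_n and g in n variables, the
  (D+1)^(n+1) products g^e_0 F_1^e_1 ... F_n^e_n with all e_i <= D have every exponent bounded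
  by cD, so they lie in a space of dimension (cD+1)^n; for D = c^n that is smaller, and a linear
  relation among them is a nonzero U with U(g, F_1, ..., F_n) = 0. Taking g = x_j, every point x
  of the fibre over m satisfies U_j(x_j, m) = 0, and for generic m the univariate polynomial
  U_j(t, m) is nonzero, so x_j ranges over its finitely many roots.
\<close>

definition mpoly_monom :: "nat set \<Rightarrow> (nat \<Rightarrow> nat) \<Rightarrow> (nat \<Rightarrow> complex) \<Rightarrow> complex" where
  "mpoly_monom V \<alpha> x = (\<Prod>i\<in>V. x i ^ \<alpha> i)"

definition mpoly_fun :: "nat set \<Rightarrow> nat \<Rightarrow> ((nat \<Rightarrow> complex) \<Rightarrow> complex) \<Rightarrow> bool" where
  "mpoly_fun V K f \<longleftrightarrow>
     (\<exists>c. is_mpoly V c \<and> (\<forall>\<alpha>. c \<alpha> \<noteq> 0 \<longrightarrow> (\<forall>i. \<alpha> i \<le> K)) \<and> f = mpoly_eval V c)"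

lemma mpoly_eval_monom: "mpoly_eval V c x = (\<Sum>\<alpha>\<in>{\<alpha>. c \<alpha> \<noteq> 0}. c \<alpha> * mpoly_monom V \<alpha> x)"
  unfolding mpoly_eval_def mpoly_monom_def ..

lemma mpoly_eval_superset:
  assumes "finite S" "{\<alpha>. c \<alpha> \<noteq> 0} \<subseteq> S"
  shows "mpoly_eval V c x = (\<Sum>\<alpha>\<in>S. c \<alpha> * mpoly_monom V \<alpha> x)"
  unfolding mpoly_eval_monom using assms by (intro sum.mono_neutral_left) auto

lemma mpoly_eval_cong:
  assumes "\<And>i. i \<in> V \<Longrightarrow> x i = y i"
  shows "mpoly_eval V c x = mpoly_eval V c y"
  unfolding mpoly_eval_def using assms by (intro sum.cong prod.cong refl) auto

lemma mpoly_eval_zero [simp]: "mpoly_eval V (\<lambda>_. 0) x = 0"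
  unfolding mpoly_eval_def by simp

lemma mpoly_monom_zero [simp]: "mpoly_monom V (\<lambda>_. 0) x = 1"
  by (simp add: mpoly_monom_def)

lemma mpoly_monom_add: "mpoly_monom V (\<lambda>i. \<alpha> i + \<beta> i) x = mpoly_monom V \<alpha> x * mpoly_monom V \<beta> x"
  by (simp add: mpoly_monom_def power_add prod.distrib)

lemma mpoly_monom_insert:
  assumes "finite V" "v \<notin> V"
  shows "mpoly_monom (insert v V) \<beta> x = x v ^ \<beta> v * mpoly_monom V \<beta> x"
  unfolding mpoly_monom_def using assms by simp

lemma mpoly_monom_cong:
  assumes "\<And>i. i \<in> V \<Longrightarrow> \<alpha> i = \<beta> i" "\<And>i. i \<in> V \<Longrightarrow> x i = y i"
  shows "mpoly_monom V \<alpha> x = mpoly_monom V \<beta> y"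
  unfolding mpoly_monom_def using assms by (intro prod.cong) auto

subsection \<open>Polynomial functions with bounded exponents\<close>

lemma mpoly_fun_eval:
  assumes "finite V" "is_mpoly V c"
  shows "\<exists>K. mpoly_fun V K (mpoly_eval V c)"
proof -
  let ?S = "{\<alpha>. c \<alpha> \<noteq> 0}"
  have "\<alpha> i \<le> (\<Sum>\<beta>\<in>?S. \<Sum>j\<in>V. \<beta> j)" if "c \<alpha> \<noteq> 0" for \<alpha> i
  proof (cases "i \<in> V")
    case True
    have "\<alpha> i \<le> (\<Sum>j\<in>V. \<alpha> j)" using assms(1) True by (intro member_le_sum) auto
    also have "\<dots> \<le> (\<Sum>\<beta>\<in>?S. \<Sum>j\<in>V. \<beta> j)"
      using assms(2) that unfolding is_mpoly_def by (intro member_le_sum) auto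
    finally show ?thesis .
  qed (use assms(2) that in \<open>auto simp: is_mpoly_def\<close>)
  then show ?thesis using assms(2) unfolding mpoly_fun_def by blast
qed

lemma mpoly_fun_monom:
  assumes "\<And>i. \<alpha> i \<le> K" "\<And>i. i \<notin> V \<Longrightarrow> \<alpha> i = 0"
  shows "mpoly_fun V K (\<lambda>x. a * mpoly_monom V \<alpha> x)"
proof -
  define c where "c = (\<lambda>\<beta>. if \<beta> = \<alpha> then a else 0)"
  have supp: "{\<beta>. c \<beta> \<noteq> 0} \<subseteq> {\<alpha>}" by (auto simp: c_def)
  then have "finite {\<beta>. c \<beta> \<noteq> 0}" by (rule finite_subset) simp
  moreover have "mpoly_eval V c x = a * mpoly_monom V \<alpha> x" for x
    using mpoly_eval_superset[OF _ supp] by (simp add: c_def)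
  ultimately show ?thesis unfolding mpoly_fun_def is_mpoly_def using assms
    by (intro exI[of _ c]) (auto simp: c_def)
qed

lemma mpoly_fun_const: "mpoly_fun V K (\<lambda>x. a)"
  using mpoly_fun_monom[of "\<lambda>_. 0" K V a] by simp

lemma mpoly_fun_var:
  assumes "finite V" "i \<in> V" "1 \<le> K"
  shows "mpoly_fun V K (\<lambda>x. x i)"
proof -
  have "mpoly_fun V K (\<lambda>x. 1 * mpoly_monom V (\<lambda>j. if j = i then 1 else 0) x)"
    using assms by (intro mpoly_fun_monom) auto
  moreover have "mpoly_monom V (\<lambda>j. if j = i then 1 else 0) x = x i" for x
    unfolding mpoly_monom_def using assms by (simp add: if_distrib cong: if_cong)
  ultimately show ?thesis by simp
qed

lemma mpoly_fun_mono:
  assumes "mpoly_fun V K f" "K \<le> K'"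
  shows "mpoly_fun V K' f"
  using assms(1) le_trans[OF _ assms(2)] unfolding mpoly_fun_def by blast

lemma mpoly_fun_add:
  assumes "mpoly_fun V K f" "mpoly_fun V K g"
  shows "mpoly_fun V K (\<lambda>x. f x + g x)"
proof -
  obtain c where c: "is_mpoly V c" "\<forall>\<alpha>. c \<alpha> \<noteq> 0 \<longrightarrow> (\<forall>i. \<alpha> i \<le> K)" "f = mpoly_eval V c"
    using assms(1) unfolding mpoly_fun_def by blast
  obtain d where d: "is_mpoly V d" "\<forall>\<alpha>. d \<alpha> \<noteq> 0 \<longrightarrow> (\<forall>i. \<alpha> i \<le> K)" "g = mpoly_eval V d"
    using assms(2) unfolding mpoly_fun_def by blast
  define S where "S = {\<alpha>. c \<alpha> \<noteq> 0} \<union> {\<alpha>. d \<alpha> \<noteq> 0}"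
  have S: "finite S" using c(1) d(1) by (auto simp: S_def is_mpoly_def)
  have supp: "{\<alpha>. c \<alpha> + d \<alpha> \<noteq> 0} \<subseteq> S" by (auto simp: S_def)
  have "c \<alpha> \<noteq> 0 \<or> d \<alpha> \<noteq> 0" if "c \<alpha> + d \<alpha> \<noteq> 0" for \<alpha>
    using that by auto
  then have "is_mpoly V (\<lambda>\<alpha>. c \<alpha> + d \<alpha>) \<and> (\<forall>\<alpha>. c \<alpha> + d \<alpha> \<noteq> 0 \<longrightarrow> (\<forall>i. \<alpha> i \<le> K))"
    using c(1,2) d(1,2) finite_subset[OF supp S] unfolding is_mpoly_def by blast
  moreover have "f x + g x = mpoly_eval V (\<lambda>\<alpha>. c \<alpha> + d \<alpha>) x" for x
  proof -
    have "f x = (\<Sum>\<alpha>\<in>S. c \<alpha> * mpoly_monom V \<alpha> x)"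
      unfolding c(3) by (rule mpoly_eval_superset[OF S]) (auto simp: S_def)
    moreover have "g x = (\<Sum>\<alpha>\<in>S. d \<alpha> * mpoly_monom V \<alpha> x)"
      unfolding d(3) by (rule mpoly_eval_superset[OF S]) (auto simp: S_def)
    ultimately show ?thesis by (simp add: mpoly_eval_superset[OF S supp] distrib_right sum.distrib)
  qed
  ultimately show ?thesis unfolding mpoly_fun_def by blast
qed

lemma mpoly_fun_sum:
  assumes "finite I" "\<And>i. i \<in> I \<Longrightarrow> mpoly_fun V K (f i)"
  shows "mpoly_fun V K (\<lambda>x. \<Sum>i\<in>I. f i x)"
  using assms
proof (induction I rule: finite_induct)
  case empty
  show ?case using mpoly_fun_const[of V K 0] by simp
next
  case (insert a I)
  then show ?case using mpoly_fun_add[of V K "f a" "\<lambda>x. \<Sum>i\<in>I. f i x"] by simp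
qed

lemma mpoly_fun_mult:
  assumes "mpoly_fun V K1 f" "mpoly_fun V K2 g"
  shows "mpoly_fun V (K1 + K2) (\<lambda>x. f x * g x)"
proof -
  obtain c where c: "is_mpoly V c" "\<forall>\<alpha>. c \<alpha> \<noteq> 0 \<longrightarrow> (\<forall>i. \<alpha> i \<le> K1)" "f = mpoly_eval V c"
    using assms(1) unfolding mpoly_fun_def by blast
  obtain d where d: "is_mpoly V d" "\<forall>\<alpha>. d \<alpha> \<noteq> 0 \<longrightarrow> (\<forall>i. \<alpha> i \<le> K2)" "g = mpoly_eval V d"
    using assms(2) unfolding mpoly_fun_def by blast
  have "(\<lambda>x. f x * g x) = (\<lambda>x. \<Sum>\<alpha>\<in>{\<alpha>. c \<alpha> \<noteq> 0}. \<Sum>\<beta>\<in>{\<beta>. d \<beta> \<noteq> 0}.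
      (c \<alpha> * d \<beta>) * mpoly_monom V (\<lambda>i. \<alpha> i + \<beta> i) x)"
    by (simp add: fun_eq_iff c(3) d(3) mpoly_eval_monom sum_product mpoly_monom_add mult_ac)
  moreover have "mpoly_fun V (K1 + K2) (\<lambda>x. \<Sum>\<alpha>\<in>{\<alpha>. c \<alpha> \<noteq> 0}. \<Sum>\<beta>\<in>{\<beta>. d \<beta> \<noteq> 0}.
      (c \<alpha> * d \<beta>) * mpoly_monom V (\<lambda>i. \<alpha> i + \<beta> i) x)"
    using c(1,2) d(1,2) unfolding is_mpoly_def
    by (intro mpoly_fun_sum mpoly_fun_monom) (auto intro: add_mono)
  ultimately show ?thesis by (simp only:)
qed

lemma mpoly_fun_power:
  assumes "mpoly_fun V K f"
  shows "mpoly_fun V (n * K) (\<lambda>x. f x ^ n)"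
proof (induction n)
  case 0
  show ?case using mpoly_fun_const[of V 0 1] by simp
next
  case (Suc n)
  show ?case using mpoly_fun_mult[OF assms Suc] by (simp add: add.commute)
qed

lemma mpoly_fun_prod:
  assumes "finite I" "\<And>i. i \<in> I \<Longrightarrow> mpoly_fun V (K i) (f i)"
  shows "mpoly_fun V (\<Sum>i\<in>I. K i) (\<lambda>x. \<Prod>i\<in>I. f i x)"
  using assms
proof (induction I rule: finite_induct)
  case empty
  show ?case using mpoly_fun_const[of V 0 1] by simp
next
  case (insert a I)
  then show ?case using mpoly_fun_mult[of V "K a" "f a" "\<Sum>i\<in>I. K i"] by simp
qed

lemma mpoly_fun_gmom:
  assumes "finite V" "a \<in> V" "b \<in> V"
  shows "mpoly_fun V i (\<lambda>x. gmom i (x a) (x b))"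
proof (induction i rule: induct_nat_012)
  case 0
  show ?case using mpoly_fun_const[of V 0 1] by simp
next
  case 1
  show ?case using mpoly_fun_var[OF assms(1,2) order_refl] by simp
next
  case (ge2 i)
  have "mpoly_fun V (Suc (Suc i)) (\<lambda>x. x a * gmom (Suc i) (x a) (x b))"
    using mpoly_fun_mult[OF mpoly_fun_var[OF assms(1,2) order_refl] ge2(2)] by simp
  moreover have "mpoly_fun V (Suc (Suc i)) (\<lambda>x. of_nat (Suc i) * x b * gmom i (x a) (x b))"
    using mpoly_fun_mult[OF mpoly_fun_mult[OF mpoly_fun_const[of V 0] mpoly_fun_var[OF assms(1,3) order_refl]] ge2(1)]
    by (rule mpoly_fun_mono) simp
  ultimately show ?case using mpoly_fun_add by simp
qed

lemma mpoly_fun_monom_comp: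
  assumes "finite W" "\<And>i. i \<in> W \<Longrightarrow> mpoly_fun V K (h i)" "\<And>i. i \<in> W \<Longrightarrow> \<beta> i \<le> D"
  shows "mpoly_fun V (card W * D * K) (\<lambda>x. mpoly_monom W \<beta> (\<lambda>i. h i x))"
proof -
  have "mpoly_fun V (\<Sum>i\<in>W. \<beta> i * K) (\<lambda>x. \<Prod>i\<in>W. h i x ^ \<beta> i)"
    using assms(1,2) by (intro mpoly_fun_prod mpoly_fun_power)
  moreover have "(\<Sum>i\<in>W. \<beta> i * K) \<le> (\<Sum>i\<in>W. D * K)"
    using assms(3) by (intro sum_mono mult_right_mono) auto
  ultimately show ?thesis unfolding mpoly_monom_def by (auto elim: mpoly_fun_mono)
qed

lemma mpoly_fun_fix_var:
  assumes "finite V" "v \<notin> V" "mpoly_fun (insert v V) K f"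
  shows "mpoly_fun V K (\<lambda>x. f (x(v := t)))"
proof -
  obtain c where c: "is_mpoly (insert v V) c" "\<forall>\<alpha>. c \<alpha> \<noteq> 0 \<longrightarrow> (\<forall>i. \<alpha> i \<le> K)"
    "f = mpoly_eval (insert v V) c"
    using assms(3) unfolding mpoly_fun_def by blast
  have "mpoly_monom V \<alpha> (x(v := t)) = mpoly_monom V (\<alpha>(v := 0)) x" for \<alpha> x
    using assms(2) by (intro mpoly_monom_cong) auto
  then have "f (x(v := t)) = (\<Sum>\<alpha>\<in>{\<alpha>. c \<alpha> \<noteq> 0}. (c \<alpha> * t ^ \<alpha> v) * mpoly_monom V (\<alpha>(v := 0)) x)" for x
    by (simp add: c(3) mpoly_eval_monom mpoly_monom_insert[OF assms(1,2)] mult_ac)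
  moreover have "mpoly_fun V K (\<lambda>x. \<Sum>\<alpha>\<in>{\<alpha>. c \<alpha> \<noteq> 0}. (c \<alpha> * t ^ \<alpha> v) * mpoly_monom V (\<alpha>(v := 0)) x)"
    using c(1,2) unfolding is_mpoly_def by (intro mpoly_fun_sum mpoly_fun_monom) auto
  ultimately show ?thesis by simp
qed

subsection \<open>Nonvanishing of nonzero polynomials\<close>

definition mpoly_univ :: "nat set \<Rightarrow> nat \<Rightarrow> ((nat \<Rightarrow> nat) \<Rightarrow> complex) \<Rightarrow> (nat \<Rightarrow> complex) \<Rightarrow> complex poly" where
  "mpoly_univ V v c x = (\<Sum>\<alpha>\<in>{\<alpha>. c \<alpha> \<noteq> 0}. monom (c \<alpha> * mpoly_monom V \<alpha> x) (\<alpha> v))"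

definition mpoly_slice :: "nat \<Rightarrow> nat \<Rightarrow> ((nat \<Rightarrow> nat) \<Rightarrow> complex) \<Rightarrow> (nat \<Rightarrow> nat) \<Rightarrow> complex" where
  "mpoly_slice v e c \<alpha> = (if \<alpha> v = 0 then c (\<alpha>(v := e)) else 0)"

lemma poly_mpoly_univ:
  assumes "finite V" "v \<notin> V"
  shows "poly (mpoly_univ V v c x) t = mpoly_eval (insert v V) c (x(v := t))"
proof -
  have "mpoly_monom V \<alpha> (x(v := t)) = mpoly_monom V \<alpha> x" for \<alpha>
    using assms(2) by (intro mpoly_monom_cong) auto
  then show ?thesis
    unfolding mpoly_univ_def mpoly_eval_monom poly_sum poly_monom mpoly_monom_insert[OF assms]
    by (simp add: mult_ac)
qed

lemma coeff_mpoly_univ: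
  assumes "v \<notin> V" "finite {\<alpha>. c \<alpha> \<noteq> 0}"
  shows "coeff (mpoly_univ V v c x) e = mpoly_eval V (mpoly_slice v e c) x"
proof -
  let ?S = "{\<alpha> \<in> {\<alpha>. c \<alpha> \<noteq> 0}. \<alpha> v = e}"
  have "coeff (mpoly_univ V v c x) e =
      (\<Sum>\<alpha>\<in>{\<alpha>. c \<alpha> \<noteq> 0}. if \<alpha> v = e then c \<alpha> * mpoly_monom V \<alpha> x else 0)"
    by (simp only: mpoly_univ_def coeff_sum coeff_monom)
  also have "\<dots> = (\<Sum>\<alpha>\<in>?S. c \<alpha> * mpoly_monom V \<alpha> x)"
    by (rule sum.inter_filter[symmetric, OF assms(2)])
  also have "\<dots> = (\<Sum>\<beta>\<in>{\<beta>. mpoly_slice v e c \<beta> \<noteq> 0}. mpoly_slice v e c \<beta> * mpoly_monom V \<beta> x)"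
  proof (rule sum.reindex_bij_witness[where i = "\<lambda>\<beta>. \<beta>(v := e)" and j = "\<lambda>\<alpha>. \<alpha>(v := 0)"])
    fix \<alpha> assume "\<alpha> \<in> ?S"
    moreover have "mpoly_monom V (\<alpha>(v := 0)) x = mpoly_monom V \<alpha> x"
      using assms(1) by (intro mpoly_monom_cong) auto
    ultimately show "(\<alpha>(v := 0))(v := e) = \<alpha>" "\<alpha>(v := 0) \<in> {\<beta>. mpoly_slice v e c \<beta> \<noteq> 0}"
      "mpoly_slice v e c (\<alpha>(v := 0)) * mpoly_monom V (\<alpha>(v := 0)) x = c \<alpha> * mpoly_monom V \<alpha> x"
      by (auto simp: mpoly_slice_def)
  next
    fix \<beta> assume "\<beta> \<in> {\<beta>. mpoly_slice v e c \<beta> \<noteq> 0}"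
    then show "(\<beta>(v := e))(v := 0) = \<beta>" "\<beta>(v := e) \<in> ?S"
      by (auto simp: mpoly_slice_def split: if_splits)
  qed
  finally show ?thesis by (simp add: mpoly_eval_monom)
qed

lemma is_mpoly_slice:
  assumes "is_mpoly (insert v V) c"
  shows "is_mpoly V (mpoly_slice v e c)"
  unfolding is_mpoly_def
proof (intro conjI allI impI)
  have "{\<alpha>. mpoly_slice v e c \<alpha> \<noteq> 0} \<subseteq> (\<lambda>\<alpha>. \<alpha>(v := 0)) ` {\<alpha>. c \<alpha> \<noteq> 0}"
  proof
    fix \<alpha> assume "\<alpha> \<in> {\<alpha>. mpoly_slice v e c \<alpha> \<noteq> 0}"
    then have "\<alpha> = (\<alpha>(v := e))(v := 0)" "c (\<alpha>(v := e)) \<noteq> 0"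
      by (auto simp: mpoly_slice_def split: if_splits)
    then show "\<alpha> \<in> (\<lambda>\<alpha>. \<alpha>(v := 0)) ` {\<alpha>. c \<alpha> \<noteq> 0}" by blast
  qed
  then show "finite {\<alpha>. mpoly_slice v e c \<alpha> \<noteq> 0}"
    using assms unfolding is_mpoly_def by (auto intro: finite_subset)
next
  fix \<alpha> i assume "mpoly_slice v e c \<alpha> \<noteq> 0" "i \<notin> V"
  then have "\<alpha> v = 0" "c (\<alpha>(v := e)) \<noteq> 0"
    by (auto simp: mpoly_slice_def split: if_splits)
  moreover have "(\<alpha>(v := e)) i = 0" if "i \<noteq> v"
    using assms \<open>c (\<alpha>(v := e)) \<noteq> 0\<close> \<open>i \<notin> V\<close> that unfolding is_mpoly_def by blast
  ultimately show "\<alpha> i = 0" by (cases "i = v") auto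
qed

lemma mpoly_slice_nonzero:
  assumes "c \<noteq> (\<lambda>_. 0)"
  shows "\<exists>e. mpoly_slice v e c \<noteq> (\<lambda>_. 0)"
proof -
  obtain \<alpha> where "c \<alpha> \<noteq> 0" using assms by blast
  then have "mpoly_slice v (\<alpha> v) c (\<alpha>(v := 0)) \<noteq> 0" by (simp add: mpoly_slice_def)
  then have "mpoly_slice v (\<alpha> v) c \<noteq> (\<lambda>_. 0)" by metis
  then show ?thesis by blast
qed

lemma mpoly_eval_empty_nonzero:
  assumes "is_mpoly {} c" "c \<noteq> (\<lambda>_. 0)"
  shows "mpoly_eval {} c x \<noteq> 0"
proof -
  have supp: "{\<alpha>. c \<alpha> \<noteq> 0} \<subseteq> {\<lambda>_. 0}"
    using assms(1) unfolding is_mpoly_def by auto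
  then have "c (\<lambda>_. 0) \<noteq> 0" using assms(2) by fastforce
  then show ?thesis using mpoly_eval_superset[OF _ supp] by simp
qed

lemma mpoly_common_nonroot:
  assumes "finite V" "finite J" "\<forall>j\<in>J. is_mpoly V (c j) \<and> c j \<noteq> (\<lambda>_. 0)"
  shows "\<exists>x. \<forall>j\<in>J. mpoly_eval V (c j) x \<noteq> 0"
  using assms(1,3)
proof (induction V arbitrary: c rule: finite_induct)
  case empty
  then have "\<forall>j\<in>J. mpoly_eval {} (c j) x \<noteq> 0" for x by (simp add: mpoly_eval_empty_nonzero)
  then show ?case by blast
next
  case (insert v V)
  have "\<forall>j\<in>J. \<exists>e. mpoly_slice v e (c j) \<noteq> (\<lambda>_. 0)"
    using mpoly_slice_nonzero insert.prems by blast
  then obtain E where "\<forall>j\<in>J. mpoly_slice v (E j) (c j) \<noteq> (\<lambda>_. 0)"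
    by metis
  moreover have "\<forall>j\<in>J. is_mpoly V (mpoly_slice v (E j) (c j))"
    using insert.prems is_mpoly_slice by blast
  ultimately obtain x where x: "\<forall>j\<in>J. mpoly_eval V (mpoly_slice v (E j) (c j)) x \<noteq> 0"
    using insert.IH[of "\<lambda>j. mpoly_slice v (E j) (c j)"] by blast
  have "mpoly_univ V v (c j) x \<noteq> 0" if "j \<in> J" for j
  proof -
    have "finite {\<alpha>. c j \<alpha> \<noteq> 0}" using insert.prems that unfolding is_mpoly_def by blast
    then have "coeff (mpoly_univ V v (c j) x) (E j) \<noteq> 0"
      using x that by (simp add: coeff_mpoly_univ[OF insert.hyps(2)])
    then show ?thesis by auto
  qed
  then have "finite (\<Union>j\<in>J. {t. poly (mpoly_univ V v (c j) x) t = 0})"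
    using assms(2) poly_roots_finite by blast
  then obtain t where "t \<notin> (\<Union>j\<in>J. {t. poly (mpoly_univ V v (c j) x) t = 0})"
    using ex_new_if_finite[OF infinite_UNIV_char_0] by blast
  then show ?case using poly_mpoly_univ[OF insert.hyps(1,2)] by auto
qed

subsection \<open>Counting monomials\<close>

definition exponent_box :: "nat set \<Rightarrow> nat \<Rightarrow> (nat \<Rightarrow> nat) set" where
  "exponent_box V K = {\<alpha>. (\<forall>i\<in>V. \<alpha> i \<le> K) \<and> (\<forall>i. i \<notin> V \<longrightarrow> \<alpha> i = 0)}"

lemma bij_betw_exponent_box:
  "bij_betw (\<lambda>\<alpha>. restrict \<alpha> V) (exponent_box V K) (PiE V (\<lambda>_. {..K}))"
proof (rule bij_betw_byWitness[where f' = "\<lambda>h i. if i \<in> V then h i else 0"])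
  show "\<forall>\<alpha>\<in>exponent_box V K. (\<lambda>i. if i \<in> V then restrict \<alpha> V i else 0) = \<alpha>"
    by (auto simp: exponent_box_def fun_eq_iff)
  show "\<forall>h\<in>PiE V (\<lambda>_. {..K}). restrict (\<lambda>i. if i \<in> V then h i else 0) V = h"
    by (auto simp: fun_eq_iff PiE_def extensional_def)
  show "(\<lambda>\<alpha>. restrict \<alpha> V) ` exponent_box V K \<subseteq> PiE V (\<lambda>_. {..K})"
    by (auto simp: exponent_box_def)
  show "(\<lambda>h i. if i \<in> V then h i else 0) ` PiE V (\<lambda>_. {..K}) \<subseteq> exponent_box V K"
    by (auto simp: exponent_box_def PiE_def Pi_def)
qed

lemma finite_exponent_box: "finite V \<Longrightarrow> finite (exponent_box V K)"
  using bij_betw_finite[OF bij_betw_exponent_box] by (simp add: finite_PiE)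

lemma card_exponent_box: "finite V \<Longrightarrow> card (exponent_box V K) = (K + 1) ^ card V"
  using bij_betw_same_card[OF bij_betw_exponent_box] by (simp add: card_PiE)

lemma monomial_count_less:
  fixes c n :: nat
  assumes "0 < c"
  shows "(c ^ n * c + 1) ^ n < (c ^ n + 1) ^ Suc n"
proof -
  have "c ^ n * c + 1 \<le> (c ^ n + 1) * c" using assms by (simp add: algebra_simps)
  then have "(c ^ n * c + 1) ^ n \<le> ((c ^ n + 1) * c) ^ n" by (rule power_mono) simp
  also have "\<dots> = (c ^ n + 1) ^ n * c ^ n" by (rule power_mult_distrib)
  also have "\<dots> < (c ^ n + 1) ^ n * (c ^ n + 1)" by simp
  also have "\<dots> = (c ^ n + 1) ^ Suc n" by (simp only: power_Suc2)
  finally show ?thesis .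
qed

interpretation fun_space: vector_space "\<lambda>(a::complex) (f::(nat \<Rightarrow> complex) \<Rightarrow> complex) x. a * f x"
  by unfold_locales (auto simp: fun_eq_iff algebra_simps)

lemma sum_fun_apply: "(\<Sum>v\<in>S. f v) x = (\<Sum>v\<in>S. f v x)"
  by (induction S rule: infinite_finite_induct) auto

lemma mpoly_fun_in_span:
  assumes "mpoly_fun V K f"
  shows "f \<in> fun_space.span (mpoly_monom V ` exponent_box V K)"
proof -
  obtain c where c: "is_mpoly V c" "\<forall>\<alpha>. c \<alpha> \<noteq> 0 \<longrightarrow> (\<forall>i. \<alpha> i \<le> K)" "f = mpoly_eval V c"
    using assms unfolding mpoly_fun_def by blast
  have "f = (\<Sum>\<alpha>\<in>{\<alpha>. c \<alpha> \<noteq> 0}. (\<lambda>x. c \<alpha> * mpoly_monom V \<alpha> x))"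
    by (auto simp: fun_eq_iff sum_fun_apply c(3) mpoly_eval_monom)
  also have "\<dots> \<in> fun_space.span (mpoly_monom V ` exponent_box V K)"
  proof (rule fun_space.span_sum)
    fix \<alpha> assume "\<alpha> \<in> {\<alpha>. c \<alpha> \<noteq> 0}"
    then have "\<alpha> \<in> exponent_box V K" using c(1,2) unfolding exponent_box_def is_mpoly_def by auto
    then have "mpoly_monom V \<alpha> \<in> fun_space.span (mpoly_monom V ` exponent_box V K)"
      by (intro fun_space.span_base) auto
    then show "(\<lambda>x. c \<alpha> * mpoly_monom V \<alpha> x) \<in> fun_space.span (mpoly_monom V ` exponent_box V K)"
      by (rule fun_space.span_scale)
  qed
  finally show ?thesis .
qed

lemma small_span_linear_relation:
  assumes "finite B" "finite T" "card T < card B" "\<And>\<beta>. \<beta> \<in> B \<Longrightarrow> G \<beta> \<in> fun_space.span T"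
  shows "\<exists>u. (\<exists>\<beta>\<in>B. u \<beta> \<noteq> 0) \<and> (\<forall>x. (\<Sum>\<beta>\<in>B. u \<beta> * G \<beta> x) = 0)"
proof (cases "inj_on G B")
  case False
  then obtain b1 b2 where b: "b1 \<in> B" "b2 \<in> B" "b1 \<noteq> b2" "G b1 = G b2"
    unfolding inj_on_def by blast
  define u where "u \<beta> = (if \<beta> = b1 then 1 else 0) - (if \<beta> = b2 then 1 else 0 :: complex)" for \<beta>
  have "(\<Sum>\<beta>\<in>B. u \<beta> * G \<beta> x) = G b1 x - G b2 x" for x
    using b assms(1) by (simp add: u_def left_diff_distrib sum_subtractf if_distrib[of "\<lambda>a. a * _"] cong: if_cong)
  then show ?thesis using b by (intro exI[of _ u]) (auto simp: u_def)
next
  case True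
  have "\<not> fun_space.independent (G ` B)"
  proof
    assume "fun_space.independent (G ` B)"
    then have "card (G ` B) \<le> card T"
      using fun_space.independent_span_bound[OF assms(2)] assms(4) by blast
    then show False using card_image[OF True] assms(3) by simp
  qed
  then obtain t w where t: "finite t" "t \<subseteq> G ` B" "(\<Sum>f\<in>t. (\<lambda>x. w f * f x)) = 0" "\<exists>f\<in>t. w f \<noteq> 0"
    unfolding fun_space.dependent_explicit by blast
  define u where "u \<beta> = (if G \<beta> \<in> t then w (G \<beta>) else 0)" for \<beta>
  have "(\<Sum>\<beta>\<in>B. u \<beta> * G \<beta> x) = 0" for x
  proof -
    have "(\<Sum>\<beta>\<in>B. u \<beta> * G \<beta> x) = (\<Sum>\<beta>\<in>{\<beta>\<in>B. G \<beta> \<in> t}. w (G \<beta>) * G \<beta> x)"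
      using assms(1) by (simp add: u_def sum.inter_filter if_distrib[of "\<lambda>a. a * _"] cong: if_cong)
    also have "\<dots> = (\<Sum>f\<in>G ` {\<beta>\<in>B. G \<beta> \<in> t}. w f * f x)"
      using True by (subst sum.reindex) (auto intro: inj_on_subset)
    also have "G ` {\<beta>\<in>B. G \<beta> \<in> t} = t" using t(2) by auto
    also have "(\<Sum>f\<in>t. w f * f x) = 0"
      using fun_cong[OF t(3), of x] by (simp add: sum_fun_apply)
    finally show ?thesis .
  qed
  moreover obtain \<beta> where "\<beta> \<in> B" "G \<beta> \<in> t" "w (G \<beta>) \<noteq> 0" using t(2,4) by blast
  ultimately show ?thesis by (intro exI[of _ u]) (auto simp: u_def)
qed

subsection \<open>Algebraic dependence and generic fibres\<close>

lemma algebraic_relation: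
  assumes "finite X" "finite V" "card V = card X" "v \<notin> V"
    and "mpoly_fun X K g" "\<And>i. i \<in> V \<Longrightarrow> mpoly_fun X K (F i)"
  shows "\<exists>U. is_mpoly (insert v V) U \<and> U \<noteq> (\<lambda>_. 0) \<and>
           (\<forall>x. mpoly_eval (insert v V) U (\<lambda>i. if i = v then g x else F i x) = 0)"
proof -
  define n where "n = card X"
  define W where "W = insert v V"
  define c where "c = Suc n * K + 1"
  define D where "D = c ^ n"
  define B where "B = exponent_box W D"
  define T where "T = mpoly_monom X ` exponent_box X (D * c)"
  define G where "G \<beta> x = mpoly_monom W \<beta> (\<lambda>i. if i = v then g x else F i x)" for \<beta> x
  have W: "finite W" "card W = Suc n" using assms(2-4) by (simp_all add: W_def n_def)
  have B: "finite B" using W(1) by (simp add: B_def finite_exponent_box)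
  have T: "finite T" using assms(1) by (simp add: T_def finite_exponent_box)
  have "card T \<le> (D * c + 1) ^ n"
    using card_image_le[OF finite_exponent_box[OF assms(1)]] card_exponent_box[OF assms(1)]
    by (simp add: T_def n_def)
  also have "\<dots> < (D + 1) ^ Suc n" unfolding D_def by (rule monomial_count_less) (simp add: c_def)
  also have "\<dots> = card B" using card_exponent_box[OF W(1)] by (simp add: B_def W(2))
  finally have "card T < card B" .
  moreover have "G \<beta> \<in> fun_space.span T" if "\<beta> \<in> B" for \<beta>
  proof -
    have "mpoly_fun X K (\<lambda>x. if i = v then g x else F i x)" if "i \<in> W" for i
      using that assms(5) assms(6)[of i] by (cases "i = v") (simp_all add: W_def)
    then have "mpoly_fun X (card W * D * K) (G \<beta>)"
      unfolding G_def using \<open>\<beta> \<in> B\<close> W(1)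
      by (intro mpoly_fun_monom_comp) (auto simp: B_def exponent_box_def)
    moreover have "card W * D * K \<le> D * c" by (simp add: W(2) c_def algebra_simps)
    ultimately have "mpoly_fun X (D * c) (G \<beta>)" by (rule mpoly_fun_mono)
    then show ?thesis unfolding T_def by (rule mpoly_fun_in_span)
  qed
  ultimately obtain u where u: "\<exists>\<beta>\<in>B. u \<beta> \<noteq> 0" "\<forall>x. (\<Sum>\<beta>\<in>B. u \<beta> * G \<beta> x) = 0"
    using small_span_linear_relation[OF B T] by blast
  define U where "U \<beta> = (if \<beta> \<in> B then u \<beta> else 0)" for \<beta>
  have supp: "{\<beta>. U \<beta> \<noteq> 0} \<subseteq> B" by (auto simp: U_def)
  have "is_mpoly W U"
    unfolding is_mpoly_def using finite_subset[OF supp B] supp by (auto simp: B_def exponent_box_def)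
  moreover have "U \<noteq> (\<lambda>_. 0)" using u(1) by (auto simp: U_def fun_eq_iff)
  moreover have "mpoly_eval W U (\<lambda>i. if i = v then g x else F i x) = 0" for x
    using u(2) by (simp add: mpoly_eval_superset[OF B supp] U_def G_def)
  ultimately show ?thesis unfolding W_def by blast
qed

lemma generic_on_mono:
  assumes "generic_on V P" "\<And>x. P x \<Longrightarrow> Q x"
  shows "generic_on V Q"
  using assms unfolding generic_on_def by blast

lemma generic_on_Ball:
  assumes "finite V" "finite J" "\<forall>j\<in>J. generic_on V (P j)"
  shows "generic_on V (\<lambda>x. \<forall>j\<in>J. P j x)"
proof -
  have "\<forall>j\<in>J. \<exists>c. is_mpoly V c \<and> c \<noteq> (\<lambda>_. 0) \<and> (\<forall>x. mpoly_eval V c x \<noteq> 0 \<longrightarrow> P j x)"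
    using assms(3) unfolding generic_on_def by blast
  then obtain c where c: "\<forall>j\<in>J. is_mpoly V (c j) \<and> c j \<noteq> (\<lambda>_. 0) \<and>
      (\<forall>x. mpoly_eval V (c j) x \<noteq> 0 \<longrightarrow> P j x)"
    by metis
  have "\<forall>j\<in>J. \<exists>K. mpoly_fun V K (mpoly_eval V (c j))"
    using mpoly_fun_eval[OF assms(1)] c by blast
  then obtain K where "\<forall>j\<in>J. mpoly_fun V (K j) (mpoly_eval V (c j))" by metis
  then have "mpoly_fun V (\<Sum>j\<in>J. K j) (\<lambda>x. \<Prod>j\<in>J. mpoly_eval V (c j) x)"
    using assms(2) by (intro mpoly_fun_prod) auto
  then obtain d where d: "is_mpoly V d" "(\<lambda>x. \<Prod>j\<in>J. mpoly_eval V (c j) x) = mpoly_eval V d"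
    unfolding mpoly_fun_def by blast
  have d_eq: "mpoly_eval V d x \<noteq> 0 \<longleftrightarrow> (\<forall>j\<in>J. mpoly_eval V (c j) x \<noteq> 0)" for x
    using fun_cong[OF d(2), of x, symmetric] assms(2) by (simp add: prod_zero_iff)
  obtain z where "\<forall>j\<in>J. mpoly_eval V (c j) z \<noteq> 0"
    using mpoly_common_nonroot[OF assms(1,2), of c] c by blast
  then have "d \<noteq> (\<lambda>_. 0)" using d_eq[of z] by auto
  moreover have "\<forall>j\<in>J. P j x" if "mpoly_eval V d x \<noteq> 0" for x
    using that d_eq c by blast
  ultimately show ?thesis unfolding generic_on_def using d(1) by blast
qed

lemma generic_on_finite_roots:
  assumes "finite V" "v \<notin> V" "is_mpoly (insert v V) U" "U \<noteq> (\<lambda>_. 0)"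
  shows "generic_on V (\<lambda>m. finite {t. mpoly_eval (insert v V) U (m(v := t)) = 0})"
proof -
  obtain z where z: "mpoly_eval (insert v V) U z \<noteq> 0"
    using mpoly_common_nonroot[of "insert v V" "{()}" "\<lambda>_. U"] assms by auto
  obtain K where "mpoly_fun (insert v V) K (mpoly_eval (insert v V) U)"
    using mpoly_fun_eval assms(1,3) by blast
  then have "mpoly_fun V K (\<lambda>m. mpoly_eval (insert v V) U (m(v := z v)))"
    by (rule mpoly_fun_fix_var[OF assms(1,2)])
  then obtain c where c: "is_mpoly V c" "(\<lambda>m. mpoly_eval (insert v V) U (m(v := z v))) = mpoly_eval V c"
    unfolding mpoly_fun_def by blast
  have c_eq: "mpoly_eval V c m = poly (mpoly_univ V v U m) (z v)" for m
    by (simp flip: c(2) add: poly_mpoly_univ[OF assms(1,2)])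
  have "c \<noteq> (\<lambda>_. 0)"
    using z fun_cong[OF c(2), of z] by auto
  moreover have "finite {t. mpoly_eval (insert v V) U (m(v := t)) = 0}" if "mpoly_eval V c m \<noteq> 0" for m
  proof -
    have "mpoly_univ V v U m \<noteq> 0" using that c_eq by auto
    then show ?thesis using poly_roots_finite by (simp flip: poly_mpoly_univ[OF assms(1,2)])
  qed
  ultimately show ?thesis unfolding generic_on_def using c(1) by blast
qed

definition fibre ::
  "nat set \<Rightarrow> nat set \<Rightarrow> (nat \<Rightarrow> (nat \<Rightarrow> complex) \<Rightarrow> complex) \<Rightarrow> (nat \<Rightarrow> complex) \<Rightarrow> (nat \<Rightarrow> complex) set" where
  "fibre X V F m = {x. (\<forall>i. i \<notin> X \<longrightarrow> x i = 0) \<and> (\<forall>i\<in>V. F i x = m i)}"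

lemma generic_finite_fibre:
  assumes "finite X" "finite V" "card V = card X" "\<And>i. i \<in> V \<Longrightarrow> mpoly_fun X K (F i)"
  shows "generic_on V (\<lambda>m. finite (fibre X V F m))"
proof -
  obtain v where v: "v \<notin> V" using assms(2) ex_new_if_finite infinite_UNIV_nat by blast
  have F: "mpoly_fun X (Suc K) (F i)" if "i \<in> V" for i
    using assms(4)[OF that] by (rule mpoly_fun_mono) simp
  have "\<forall>j\<in>X. \<exists>U. is_mpoly (insert v V) U \<and> U \<noteq> (\<lambda>_. 0) \<and>
      (\<forall>x. mpoly_eval (insert v V) U (\<lambda>i. if i = v then x j else F i x) = 0)"
    using algebraic_relation[OF assms(1-3) v mpoly_fun_var[OF assms(1)] F] by simp
  then obtain U where U: "\<forall>j\<in>X. is_mpoly (insert v V) (U j) \<and> U j \<noteq> (\<lambda>_. 0) \<and>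
      (\<forall>x. mpoly_eval (insert v V) (U j) (\<lambda>i. if i = v then x j else F i x) = 0)"
    by metis
  define R where "R j m = {t. mpoly_eval (insert v V) (U j) (m(v := t)) = 0}" for j m
  have "generic_on V (\<lambda>m. \<forall>j\<in>X. finite (R j m))"
    unfolding R_def using assms(1,2) v U by (intro generic_on_Ball generic_on_finite_roots ballI) auto
  moreover have "finite (fibre X V F m)" if R: "\<forall>j\<in>X. finite (R j m)" for m
  proof -
    have "x j \<in> R j m" if "x \<in> fibre X V F m" "j \<in> X" for x j
    proof -
      have "mpoly_eval (insert v V) (U j) (m(v := x j)) =
          mpoly_eval (insert v V) (U j) (\<lambda>i. if i = v then x j else F i x)"
        using that(1) by (intro mpoly_eval_cong) (auto simp: fibre_def)
      then show ?thesis using U that(2) by (simp add: R_def)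
    qed
    then have "fibre X V F m \<subseteq> {x. \<forall>i. (i \<in> X \<longrightarrow> x i \<in> (\<Union>j\<in>X. R j m)) \<and> (i \<notin> X \<longrightarrow> x i = 0)}"
      by (auto simp: fibre_def)
    moreover have "finite {x. \<forall>i. (i \<in> X \<longrightarrow> x i \<in> (\<Union>j\<in>X. R j m)) \<and> (i \<notin> X \<longrightarrow> x i = 0)}"
      using R assms(1) by (intro finite_set_of_finite_funs) auto
    ultimately show ?thesis by (rule finite_subset)
  qed
  ultimately show ?thesis by (rule generic_on_mono)
qed

subsection \<open>The moment system\<close>

definition moment_map :: "nat \<Rightarrow> (nat \<Rightarrow> complex) \<Rightarrow> nat \<Rightarrow> (nat \<Rightarrow> complex) \<Rightarrow> complex" where
  "moment_map k lam i x = (\<Sum>l=1..k. lam l * gmom i (x l) (x 0))"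

lemma mpoly_fun_moment_map:
  assumes "i \<le> K"
  shows "mpoly_fun {0..k} K (moment_map k lam i)"
  unfolding moment_map_def
proof (intro mpoly_fun_sum)
  fix l assume "l \<in> {1..k}"
  then have "mpoly_fun {0..k} (0 + i) (\<lambda>x. lam l * gmom i (x l) (x 0))"
    by (intro mpoly_fun_mult mpoly_fun_const mpoly_fun_gmom) auto
  then show "mpoly_fun {0..k} K (\<lambda>x. lam l * gmom i (x l) (x 0))"
    by (rule mpoly_fun_mono) (simp add: assms)
qed simp

lemma moment_solutions_subset_fibre:
  "moment_solutions k lam m \<subseteq> (\<lambda>x. (x(0 := 0), x 0)) ` fibre {0..k} {1..k+1} (moment_map k lam) m"
proof
  fix y assume y: "y \<in> moment_solutions k lam m"
  then obtain mu s where ms: "y = (mu, s)" by force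
  then have "mu(0 := s) \<in> fibre {0..k} {1..k+1} (moment_map k lam) m"
    using y by (auto simp: moment_solutions_def fibre_def moment_map_def)
  moreover have "mu 0 = 0" using y ms by (auto simp: moment_solutions_def)
  ultimately show "y \<in> (\<lambda>x. (x(0 := 0), x 0)) ` fibre {0..k} {1..k+1} (moment_map k lam) m"
    using ms by (intro image_eqI[of _ _ "mu(0 := s)"]) auto
qed

theorem mainTheorem6:
  fixes k :: nat and lam :: "nat \<Rightarrow> complex"
  assumes "k \<ge> 1"
    and "\<forall>l\<in>{1..k}. lam l \<noteq> 0"
  shows "generic_on {1..k+1} (\<lambda>m. finite (moment_solutions k lam m))"
proof -
  have "generic_on {1..k+1} (\<lambda>m. finite (fibre {0..k} {1..k+1} (moment_map k lam) m))"
    by (rule generic_finite_fibre[where K = "k + 1"]) (auto intro: mpoly_fun_moment_map)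
  then show ?thesis
    by (rule generic_on_mono) (auto intro: finite_subset[OF moment_solutions_subset_fibre])
qed

end
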